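(* For natural concepts $C_1,C_2,C_3,D_1,D_2,D_3,E_1,E_2$: (a) $\{C_1:C_2::D_1:D_2,\ D_1:D_2::E_1:E_2\}\models C_1:C_2::E_1:E_2$; (b) $\{C_1:C_2::D_1:D_2,\ C_2:C_3::D_2:D_3\}\models C_1:C_3::D_1:D_3$.
   Context: Concepts: $C,D::=\top\mid\bot\mid A\mid C\sqcap D\mid \exists r.C\mid N$; natural concepts: $N,N'::=A'\mid N\sqcap N'\mid N\bowtie N'\mid \exists r'.N$, with $A$ a concept name, $A'$ a natural concept name, $r$ a role name, $r'$ an intra-domain role name. A domain constrained interpretation is $\mathfrak{I}=(\mathcal{I},[\mathcal{F}_1,\dots,\mathcal{F}_k],\mathcal{X},\pi,\sim,\mathcal{S})$ where $\mathcal{I}=(\Delta^{\mathcal{I}},\cdot^{\mathcal{I}})$ is a classical DL interpretation, $[\mathcal{F}_1,\dots,\mathcal{F}_k]$ partitions a nonempty finite set $\mathcal{F}$, $\mathcal{X}\subseteq2^{\mathcal{F}}$ with $\mathcal{F}\in\mathcal{X}$, $\pi:\Delta^{\mathcal{I}}\to2^{\mathcal{F}}$, $\sim$ an equivalence relation on $\{1,\dots,k\}$, $\mathcal{S}=\{\sigma_{(s,t)}\mid(s,t)\in\sim\}$ with $\sigma_{(s,t)}:\mathcal{F}_s\to\mathcal{F}_t$ bijections. With $\mathcal{C}=\{G\subseteq\mathcal{F}\mid X\not\subseteq G\ \forall X\in\mathcal{X}\}$ and $\mathcal{C}^i=\{G\in\mathcal{C}\mid G\subseteq\mathcal{F}_i\}$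 it is required: (1) $X\not\subseteq\pi(d)$ for all $d$, $X\in\mathcal{X}$; (2) each $G\in\mathcal{C}$ is $\pi(d)$ for some $d$; (3) $\sigma_{(s,t)}^{-1}=\sigma_{(t,s)}$, $\sigma_{(t,u)}\circ\sigma_{(s,t)}=\sigma_{(s,u)}$; (4) $\sigma_{(i,j)}(G)\in\mathcal{C}$ for $G\in\mathcal{C}^i$, $(i,j)\in\sim$; (5) $\{f,g\}\in\mathcal{X}$ whenever $f\in\mathcal{F}_i$, $g\in\mathcal{F}_j$, $(i,j)\in\sim$, $i\neq j$. $\varphi(C)=\bigcap\{\pi(d)\mid d\in C^{\mathcal{I}}\}$ ($=\mathcal{F}$ if $C^{\mathcal{I}}=\emptyset$). Concepts are interpreted as usual, with $(N\bowtie N')^{\mathcal{I}}=\{d\mid\varphi(N)\cap\varphi(N')\subseteq\pi(d)\}$. An intra-domain relation $r$: there is $\kappa_r:2^{\mathcal{F}}\to2^{\mathcal{F}}$ with $(\exists r.C)^{\mathcal{I}}=\{d\mid\kappa_r(\varphi(C))\subseteq\pi(d)\}$ for all $C$, $\kappa_r(G)=\bigcup_i\kappa_r(G\cap\mathcal{F}_i)$ for $G\in\mathcal{C}$, $\kappa_r(G)\subseteq\mathcal{F}_i$ for $G\in\mathcal{C}^i$, $\kappa_r(\sigma_{(i,j)}(G))=\sigma_{(i,j)}(\kappa_r(G))$ for $(i,j)\in\sim$, $G\in\mathcal{C}^i$, and $\kappa_r(G)\neq\emptyset$ for $G\in\mathcal{C}^i\setminus\{\emptyset\}$. $\delta(C)=\{i\mid\mathcal{F}_i\cap\varphi(C)\neq\emptyset\}$.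 For $U=\{(s_1,t_1),\dots,(s_l,t_l)\}\subseteq\sim$ with pairwise distinct $s_i$ and pairwise distinct $t_i$, the domain translation $\sigma_U:\mathcal{F}\to\mathcal{F}$ maps $f\in\mathcal{F}_{s_i}$ to $\sigma_{(s_i,t_i)}(f)$ and fixes all other features; $\mathrm{src}(U)=\{s_i\}$, $\mathrm{tgt}(U)=\{t_i\}$. $\mu(C,D)$ is the set of $\sigma_U$ with $\varphi(D)=\sigma_U(\varphi(C))$, $\mathrm{src}(U)\subseteq\delta(C)$, $\mathrm{tgt}(U)\cap(\delta(C)\setminus\mathrm{src}(U))=\emptyset$. An analogy assertion $C_1:C_2::D_1:D_2$ (between natural concepts) is satisfied in $\mathfrak{I}$ iff $\mu(C_1,C_2)\cap\mu(D_1,D_2)\neq\emptyset$; a concept inclusion $C\sqsubseteq D$ is satisfied iff $C^{\mathcal{I}}\subseteq D^{\mathcal{I}}$. A TBox is a finite set of concept inclusions and analogy assertions. $\mathfrak{I}$ is a model of a TBox $\mathcal{T}$ if it satisfies all its elements, every natural concept $N$ in $\mathcal{T}$ satisfies $N^{\mathcal{I}}=\{d\mid\varphi(N)\subseteq\pi(d)\}$, and every intra-domain role name is interpreted as an intra-domain relation. $\mathcal{T}\models\psi$ means every model of $\mathcal{T}$ satisfies $\psi$. *)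

theory Defs
  imports Main
begin

text \<open>Concepts over concept names of type 'c and role names of type 'r.
  The constructor Bowtie is only meant to occur inside natural concepts
  (see the predicates natural and wf_concept below).\<close>

datatype ('c, 'r) concept =
    Top
  | Bot
  | Atom 'c
  | And "('c, 'r) concept" "('c, 'r) concept"
  | Ex 'r "('c, 'r) concept"
  | Bowtie "('c, 'r) concept" "('c, 'r) concept"

text \<open>Natural concepts, relative to the set NCN of natural concept names and the
  set IR of intra-domain role names.\<close>

inductive natural :: "'c set \<Rightarrow> 'r set \<Rightarrow> ('c, 'r) concept \<Rightarrow> bool"
  for NCN IR where
  nat_atom: "A \<in> NCN \<Longrightarrow> natural NCN IR (Atom A)"
| nat_and: "natural NCN IR N \<Longrightarrow> natural NCN IR N' \<Longrightarrow> natural NCN IR (And N N')"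
| nat_bowtie: "natural NCN IR N \<Longrightarrow> natural NCN IR N' \<Longrightarrow> natural NCN IR (Bowtie N N')"
| nat_ex: "r \<in> IR \<Longrightarrow> natural NCN IR N \<Longrightarrow> natural NCN IR (Ex r N)"

inductive wf_concept :: "'c set \<Rightarrow> 'r set \<Rightarrow> ('c, 'r) concept \<Rightarrow> bool"
  for NCN IR where
  wf_top: "wf_concept NCN IR Top"
| wf_bot: "wf_concept NCN IR Bot"
| wf_atom: "wf_concept NCN IR (Atom A)"
| wf_and: "wf_concept NCN IR C \<Longrightarrow> wf_concept NCN IR D \<Longrightarrow> wf_concept NCN IR (And C D)"
| wf_ex: "wf_concept NCN IR C \<Longrightarrow> wf_concept NCN IR (Ex r C)"
| wf_nat: "natural NCN IR N \<Longrightarrow> wf_concept NCN IR N"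

fun subconcepts :: "('c, 'r) concept \<Rightarrow> ('c, 'r) concept set" where
  "subconcepts Top = {Top}"
| "subconcepts Bot = {Bot}"
| "subconcepts (Atom A) = {Atom A}"
| "subconcepts (And C D) = insert (And C D) (subconcepts C \<union> subconcepts D)"
| "subconcepts (Ex r C) = insert (Ex r C) (subconcepts C)"
| "subconcepts (Bowtie C D) = insert (Bowtie C D) (subconcepts C \<union> subconcepts D)"

datatype ('c, 'r) axiom =
    Incl "('c, 'r) concept" "('c, 'r) concept"
  | Analogy "('c, 'r) concept" "('c, 'r) concept" "('c, 'r) concept" "('c, 'r) concept"

fun axiom_concepts :: "('c, 'r) axiom \<Rightarrow> ('c, 'r) concept set" where
  "axiom_concepts (Incl C D) = subconcepts C \<union> subconcepts D"
| "axiom_concepts (Analogy C1 C2 D1 D2) =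
     subconcepts C1 \<union> subconcepts C2 \<union> subconcepts D1 \<union> subconcepts D2"

fun wf_axiom :: "'c set \<Rightarrow> 'r set \<Rightarrow> ('c, 'r) axiom \<Rightarrow> bool" where
  "wf_axiom NCN IR (Incl C D) = (wf_concept NCN IR C \<and> wf_concept NCN IR D)"
| "wf_axiom NCN IR (Analogy C1 C2 D1 D2) =
     (natural NCN IR C1 \<and> natural NCN IR C2 \<and> natural NCN IR D1 \<and> natural NCN IR D2)"

definition wf_tbox :: "'c set \<Rightarrow> 'r set \<Rightarrow> ('c, 'r) axiom set \<Rightarrow> bool" where
  "wf_tbox NCN IR T \<longleftrightarrow> finite T \<and> (\<forall>ax\<in>T. wf_axiom NCN IR ax)"

text \<open>The partition
  [F_1,...,F_k] is given by k and part :: nat => 'f set (indices 1..k);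
  sim is the equivalence relation on {1..k}; sig s t is sigma_(s,t).\<close>

record ('d, 'f, 'c, 'r) dci =
  dom :: "'d set"
  cint :: "'c \<Rightarrow> 'd set"
  rint :: "'r \<Rightarrow> ('d \<times> 'd) set"
  feats :: "'f set"
  nparts :: nat
  part :: "nat \<Rightarrow> 'f set"
  excl :: "'f set set"
  pi :: "'d \<Rightarrow> 'f set"
  sim :: "(nat \<times> nat) set"
  sig :: "nat \<Rightarrow> nat \<Rightarrow> 'f \<Rightarrow> 'f"

definition idx :: "('d, 'f, 'c, 'r) dci \<Rightarrow> nat set" where
  "idx I = {1..nparts I}"

definition consistent :: "('d, 'f, 'c, 'r) dci \<Rightarrow> 'f set set" where
  "consistent I = {G. G \<subseteq> feats I \<and> (\<forall>X\<in>excl I. \<not> X \<subseteq> G)}"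

definition consistent_in :: "('d, 'f, 'c, 'r) dci \<Rightarrow> nat \<Rightarrow> 'f set set" where
  "consistent_in I i = {G \<in> consistent I. G \<subseteq> part I i}"

definition is_dci :: "('d, 'f, 'c, 'r) dci \<Rightarrow> bool" where
  "is_dci I \<longleftrightarrow>
     \<comment> \<open>classical interpretation\<close>
     dom I \<noteq> {} \<and> (\<forall>A. cint I A \<subseteq> dom I) \<and> (\<forall>r. rint I r \<subseteq> dom I \<times> dom I) \<and>
     \<comment> \<open>F nonempty finite, partitioned into F_1..F_k\<close>
     finite (feats I) \<and> feats I \<noteq> {} \<and>
     (\<forall>i\<in>idx I. part I i \<noteq> {}) \<and>
     (\<forall>i\<in>idx I. \<forall>j\<in>idx I. i \<noteq> j \<longrightarrow> part I i \<inter> part I j = {}) \<and>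
     (\<Union>i\<in>idx I. part I i) = feats I \<and>
     \<comment> \<open>X a set of subsets of F containing F\<close>
     excl I \<subseteq> Pow (feats I) \<and> feats I \<in> excl I \<and>
     \<comment> \<open>pi maps into 2^F\<close>
     (\<forall>d\<in>dom I. pi I d \<subseteq> feats I) \<and>
     \<comment> \<open>sim an equivalence relation on {1..k}; sigmas bijections\<close>
     equiv (idx I) (sim I) \<and>
     (\<forall>(s, t)\<in>sim I. bij_betw (sig I s t) (part I s) (part I t)) \<and>
     \<comment> \<open>(1)\<close>
     (\<forall>d\<in>dom I. \<forall>X\<in>excl I. \<not> X \<subseteq> pi I d) \<and>
     \<comment> \<open>(2)\<close>
     (\<forall>G\<in>consistent I. \<exists>d\<in>dom I. pi I d = G) \<and>
     \<comment> \<open>(3)\<close>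
     (\<forall>(s, t)\<in>sim I. \<forall>f\<in>part I s. sig I t s (sig I s t f) = f) \<and>
     (\<forall>(s, t)\<in>sim I. \<forall>u. (t, u) \<in> sim I \<longrightarrow>
        (\<forall>f\<in>part I s. sig I t u (sig I s t f) = sig I s u f)) \<and>
     \<comment> \<open>(4)\<close>
     (\<forall>(i, j)\<in>sim I. \<forall>G\<in>consistent_in I i. sig I i j ` G \<in> consistent I) \<and>
     \<comment> \<open>(5)\<close>
     (\<forall>(i, j)\<in>sim I. i \<noteq> j \<longrightarrow>
        (\<forall>f\<in>part I i. \<forall>g\<in>part I j. {f, g} \<in> excl I))"

definition phiS :: "('d, 'f, 'c, 'r) dci \<Rightarrow> 'd set \<Rightarrow> 'f set" where
  "phiS I S = (if S = {} then feats I else \<Inter>(pi I ` S))"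

fun ext :: "('d, 'f, 'c, 'r) dci \<Rightarrow> ('c, 'r) concept \<Rightarrow> 'd set" where
  "ext I Top = dom I"
| "ext I Bot = {}"
| "ext I (Atom A) = cint I A"
| "ext I (And C D) = ext I C \<inter> ext I D"
| "ext I (Ex r C) = {d \<in> dom I. \<exists>e. (d, e) \<in> rint I r \<and> e \<in> ext I C}"
| "ext I (Bowtie N N') =
     {d \<in> dom I. phiS I (ext I N) \<inter> phiS I (ext I N') \<subseteq> pi I d}"

definition phi :: "('d, 'f, 'c, 'r) dci \<Rightarrow> ('c, 'r) concept \<Rightarrow> 'f set" where
  "phi I C = phiS I (ext I C)"

definition intra_domain ::
  "'c set \<Rightarrow> 'r set \<Rightarrow> ('d, 'f, 'c, 'r) dci \<Rightarrow> 'r \<Rightarrow> bool" where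
  "intra_domain NCN IR I r \<longleftrightarrow>
     (\<exists>\<kappa> :: 'f set \<Rightarrow> 'f set.
        (\<forall>C. wf_concept NCN IR C \<longrightarrow>
           ext I (Ex r C) = {d \<in> dom I. \<kappa> (phi I C) \<subseteq> pi I d}) \<and>
        (\<forall>G\<in>consistent I. \<kappa> G = (\<Union>i\<in>idx I. \<kappa> (G \<inter> part I i))) \<and>
        (\<forall>i\<in>idx I. \<forall>G\<in>consistent_in I i. \<kappa> G \<subseteq> part I i) \<and>
        (\<forall>(i, j)\<in>sim I. \<forall>G\<in>consistent_in I i.
           \<kappa> (sig I i j ` G) = sig I i j ` (\<kappa> G)) \<and>
        (\<forall>i\<in>idx I. \<forall>G\<in>consistent_in I i - {{}}. \<kappa> G \<noteq> {}))"

definition delta :: "('d, 'f, 'c, 'r) dci \<Rightarrow> ('c, 'r) concept \<Rightarrow> nat set" where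
  "delta I C = {i \<in> idx I. part I i \<inter> phi I C \<noteq> {}}"

definition admissible :: "('d, 'f, 'c, 'r) dci \<Rightarrow> (nat \<times> nat) set \<Rightarrow> bool" where
  "admissible I U \<longleftrightarrow> U \<subseteq> sim I \<and> inj_on fst U \<and> inj_on snd U"

definition transl :: "('d, 'f, 'c, 'r) dci \<Rightarrow> (nat \<times> nat) set \<Rightarrow> 'f \<Rightarrow> 'f" where
  "transl I U f =
     (if \<exists>p\<in>U. f \<in> part I (fst p)
      then (let p = (SOME p. p \<in> U \<and> f \<in> part I (fst p)) in sig I (fst p) (snd p) f)
      else f)"

definition mu :: "('d, 'f, 'c, 'r) dci \<Rightarrow> ('c, 'r) concept \<Rightarrow> ('c, 'r) concept
                   \<Rightarrow> ('f \<Rightarrow> 'f) set" where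
  "mu I C D = {transl I U | U. admissible I U \<and>
                 phi I D = transl I U ` phi I C \<and>
                 fst ` U \<subseteq> delta I C \<and>
                 snd ` U \<inter> (delta I C - fst ` U) = {}}"

fun sat :: "('d, 'f, 'c, 'r) dci \<Rightarrow> ('c, 'r) axiom \<Rightarrow> bool" where
  "sat I (Incl C D) = (ext I C \<subseteq> ext I D)"
| "sat I (Analogy C1 C2 D1 D2) = (mu I C1 C2 \<inter> mu I D1 D2 \<noteq> {})"

definition is_model ::
  "'c set \<Rightarrow> 'r set \<Rightarrow> ('c, 'r) axiom set \<Rightarrow> ('d, 'f, 'c, 'r) dci \<Rightarrow> bool" where
  "is_model NCN IR T I \<longleftrightarrow>
     is_dci I \<and>
     (\<forall>ax\<in>T. sat I ax) \<and>
     (\<forall>ax\<in>T. \<forall>N\<in>axiom_concepts ax. natural NCN IR N \<longrightarrow>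
        ext I N = {d \<in> dom I. phi I N \<subseteq> pi I d}) \<and>
     (\<forall>r\<in>IR. intra_domain NCN IR I r)"

text \<open>Entailment.  The domain type 'd and feature type 'f are fixed inside the
  formula; a theorem about entails with free type variables holds for all of
  them, i.e. for all models.\<close>

definition entails ::
  "'c set \<Rightarrow> 'r set \<Rightarrow> ('c, 'r) axiom set \<Rightarrow> ('c, 'r) axiom \<Rightarrow>
   ('d \<times> 'f) itself \<Rightarrow> bool" where
  "entails NCN IR T ax _ \<longleftrightarrow>
     (\<forall>I :: ('d, 'f, 'c, 'r) dci. is_model NCN IR T I \<longrightarrow> sat I ax)"

end

theory Submission
  imports Defs
begin

text \<open>
Every admissible \<open>U\<close> induces a map \<open>target U\<close> on domain indices, and \<open>\<sigma>\<^sub>U\<close> acts on the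
domain \<open>F\<^sub>s\<close> as the bijection \<open>\<sigma>\<close> of the pair \<open>(s, target U s)\<close>. If \<open>U\<close> witnesses \<open>\<sigma>\<^sub>U \<in> \<mu>(C, D)\<close>,
then \<open>target U\<close> maps \<open>\<delta>(C)\<close> bijectively onto \<open>\<delta>(D)\<close> and fixes every index outside \<open>\<delta>(C)\<close>.

(b) Composing the two translations gives the index map \<open>\<rho> = target V \<circ> target U\<close>. Its graph
over \<open>\<delta>(C\<^sub>1) \<inter> \<delta>(D\<^sub>1)\<close> witnesses the composite for both pairs, because an index of \<open>\<delta>(C\<^sub>1)\<close>
outside \<open>\<delta>(D\<^sub>1)\<close> is fixed by the first translation and does not lie in \<open>\<delta>(D\<^sub>2)\<close>, so it is
fixed by the second one as well (and symmetrically).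

(a) If the two translations witnessing \<open>D\<^sub>1 : D\<^sub>2\<close> agree on \<open>\<delta>(D\<^sub>1)\<close>, they coincide, and
\<open>\<sigma>\<close> itself is common to \<open>C\<^sub>1 : C\<^sub>2\<close> and \<open>E\<^sub>1 : E\<^sub>2\<close>. Otherwise \<open>\<phi>(D\<^sub>2)\<close> contains features
of two distinct \<open>\<sim>\<close>-equivalent domains, so by condition (5) it is inconsistent, i.e.
\<open>\<phi>(D\<^sub>2) = F\<close>, and then \<open>\<phi>(D\<^sub>1) = F\<close> by counting. Now either \<open>\<phi>(C\<^sub>1) = F\<close>, and then
\<open>\<mu>(C\<^sub>1, C\<^sub>2) = \<mu>(D\<^sub>1, D\<^sub>2)\<close>; or \<open>\<phi>(C\<^sub>1)\<close> is consistent and is fixed by \<open>\<sigma>\<close>, which is injective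
on all indices, so the identity lies in \<open>\<mu>(C\<^sub>1, C\<^sub>2)\<close>. The same holds for \<open>E\<^sub>1 : E\<^sub>2\<close>.
\<close>

lemma subset_eq_if_image_eq:
  assumes "finite B" "A \<subseteq> B" "f ` A = B"
  shows "A = B"
proof -
  have "finite A"
    using assms(1,2) by (rule finite_subset[rotated])
  then have "card B \<le> card A"
    using assms(3) card_image_le by blast
  then have "card A = card B"
    using card_mono[OF assms(1,2)] by simp
  then show ?thesis
    by (rule card_subset_eq[OF assms(1,2)])
qed

definition target :: "(nat \<times> nat) set \<Rightarrow> nat \<Rightarrow> nat" where
  "target U s = (if s \<in> fst ` U then THE t. (s, t) \<in> U else s)"

lemma target_eqI:
  assumes "inj_on fst U" "(s, t) \<in> U"
  shows "target U s = t"
proof -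
  have "(THE t. (s, t) \<in> U) = t"
  proof (rule the_equality)
    fix t'
    assume "(s, t') \<in> U"
    with assms show "t' = t"
      using inj_onD[of fst U "(s, t')" "(s, t)"] by simp
  qed (fact assms(2))
  moreover have "s \<in> fst ` U"
    using assms(2) by force
  ultimately show ?thesis
    unfolding target_def by simp
qed

lemma target_notin: "s \<notin> fst ` U \<Longrightarrow> target U s = s"
  unfolding target_def by simp

lemma target_in:
  assumes "inj_on fst U" "s \<in> fst ` U"
  shows "(s, target U s) \<in> U"
proof -
  obtain t where "(s, t) \<in> U"
    using assms(2) by force
  with assms(1) show ?thesis
    by (simp add: target_eqI)
qed

lemma target_graph:
  "target ((\<lambda>s. (s, \<rho> s)) ` A) s = (if s \<in> A then \<rho> s else s)"
proof (cases "s \<in> A")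
  case True
  have "inj_on fst ((\<lambda>s. (s, \<rho> s)) ` A)"
    by (auto simp: inj_on_def)
  with True show ?thesis
    by (simp add: target_eqI)
next
  case False
  then have "s \<notin> fst ` (\<lambda>s. (s, \<rho> s)) ` A"
    by (simp add: image_image)
  with False show ?thesis
    by (simp add: target_notin)
qed

lemma transl_empty: "transl I {} = id"
  unfolding transl_def by auto

lemma delta_subset_idx: "delta I C \<subseteq> idx I"
  unfolding delta_def by blast

lemma phi_subset_pi: "d \<in> ext I C \<Longrightarrow> phi I C \<subseteq> pi I d"
  unfolding phi_def phiS_def by auto

lemma in_deltaI: "s \<in> idx I \<Longrightarrow> f \<in> part I s \<Longrightarrow> f \<in> phi I C \<Longrightarrow> s \<in> delta I C"
  unfolding delta_def by blast

lemma in_deltaE: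
  assumes "s \<in> delta I C"
  obtains f where "s \<in> idx I" "f \<in> part I s" "f \<in> phi I C"
  using assms unfolding delta_def by blast

definition mu_witness ::
  "('d, 'f, 'c, 'r) dci \<Rightarrow> (nat \<times> nat) set \<Rightarrow> ('c, 'r) concept \<Rightarrow> ('c, 'r) concept \<Rightarrow> bool"
where
  "mu_witness I U C D \<longleftrightarrow> admissible I U \<and> phi I D = transl I U ` phi I C \<and>
     fst ` U \<subseteq> delta I C \<and> snd ` U \<inter> (delta I C - fst ` U) = {}"

lemma mu_iff_witness: "\<sigma> \<in> mu I C D \<longleftrightarrow> (\<exists>U. \<sigma> = transl I U \<and> mu_witness I U C D)"
  unfolding mu_def mu_witness_def by blast

lemma obtain_common_witnesses:
  assumes "mu I C C' \<inter> mu I D D' \<noteq> {}"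
  obtains U U' where "mu_witness I U C C'" "mu_witness I U' D D'" "transl I U = transl I U'"
proof -
  obtain \<sigma> where "\<sigma> \<in> mu I C C'" "\<sigma> \<in> mu I D D'"
    using assms by blast
  then show thesis
    using that unfolding mu_iff_witness by blast
qed

lemma mu_cong_phi: "phi I C = phi I C' \<Longrightarrow> phi I D = phi I D' \<Longrightarrow> mu I C D = mu I C' D'"
  unfolding mu_def delta_def by simp

lemma mu_witness_empty: "phi I D = phi I C \<Longrightarrow> mu_witness I {} C D"
  unfolding mu_witness_def admissible_def transl_empty by simp

lemma target_outside_delta:
  assumes "mu_witness I U C D" "s \<notin> delta I C"
  shows "target U s = s"
proof -
  have "s \<notin> fst ` U"
    using assms unfolding mu_witness_def by blast
  then show ?thesis
    by (rule target_notin)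
qed

lemma target_notin_unmoved_delta:
  assumes "mu_witness I U C D" "s \<in> fst ` U"
  shows "target U s \<notin> delta I C - fst ` U"
proof -
  have "inj_on fst U"
    using assms(1) unfolding mu_witness_def admissible_def by blast
  then have "target U s \<in> snd ` U"
    using target_in[OF _ assms(2)] by force
  then show ?thesis
    using assms(1) unfolding mu_witness_def by blast
qed

lemma inj_on_target_delta:
  assumes "mu_witness I U C D"
  shows "inj_on (target U) (delta I C)"
proof (rule inj_onI)
  fix s t
  assume s: "s \<in> delta I C" and t: "t \<in> delta I C" and eq: "target U s = target U t"
  consider "s \<in> fst ` U" "t \<in> fst ` U" | "s \<in> fst ` U" "t \<notin> fst ` U"
    | "s \<notin> fst ` U" "t \<in> fst ` U" | "s \<notin> fst ` U" "t \<notin> fst ` U"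
    by blast
  then show "s = t"
  proof cases
    case 1
    have inj: "inj_on fst U" "inj_on snd U"
      using assms unfolding mu_witness_def admissible_def by auto
    with 1 have "(s, target U s) \<in> U" "(t, target U t) \<in> U"
      using target_in by auto
    then show ?thesis
      using inj_onD[OF inj(2)] eq by fastforce
  next
    case 2
    then show ?thesis
      using target_notin_unmoved_delta[OF assms, of s] t eq target_notin[of t U] by simp
  next
    case 3
    then show ?thesis
      using target_notin_unmoved_delta[OF assms, of t] s eq target_notin[of s U] by simp
  next
    case 4
    then show ?thesis
      using eq by (simp add: target_notin)
  qed
qed

locale domain_constrained =
  fixes I :: "('d, 'f, 'c, 'r) dci"
  assumes is_dci: "is_dci I"
begin

lemma part_nonempty: "i \<in> idx I \<Longrightarrow> part I i \<noteq> {}"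
  using is_dci unfolding is_dci_def by (elim conjE) blast

lemma part_subset_feats: "i \<in> idx I \<Longrightarrow> part I i \<subseteq> feats I"
  using is_dci unfolding is_dci_def by (elim conjE) blast

lemma finite_feats: "finite (feats I)"
  using is_dci unfolding is_dci_def by (elim conjE) blast

lemma part_disjoint: "i \<in> idx I \<Longrightarrow> j \<in> idx I \<Longrightarrow> f \<in> part I i \<Longrightarrow> f \<in> part I j \<Longrightarrow> i = j"
  using is_dci unfolding is_dci_def disjoint_iff by (elim conjE) blast

lemma feats_in_part:
  assumes "f \<in> feats I"
  obtains s where "s \<in> idx I" "f \<in> part I s"
proof -
  have "(\<Union>i\<in>idx I. part I i) = feats I"
    using is_dci unfolding is_dci_def by (elim conjE) assumption
  with assms that show thesis
    by blast
qed

lemma pi_subset_feats: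
  assumes "d \<in> dom I"
  shows "pi I d \<subseteq> feats I"
proof -
  have "\<forall>d\<in>dom I. pi I d \<subseteq> feats I"
    using is_dci unfolding is_dci_def by (elim conjE) assumption
  with assms show ?thesis
    by blast
qed

lemma cint_subset_dom: "cint I A \<subseteq> dom I"
proof -
  have "\<forall>A. cint I A \<subseteq> dom I"
    using is_dci unfolding is_dci_def by (elim conjE) assumption
  then show ?thesis
    by blast
qed

lemma excl_not_subset_pi:
  assumes "d \<in> dom I" "X \<in> excl I"
  shows "\<not> X \<subseteq> pi I d"
proof -
  have "\<forall>d\<in>dom I. \<forall>X\<in>excl I. \<not> X \<subseteq> pi I d"
    using is_dci unfolding is_dci_def by (elim conjE) assumption
  with assms show ?thesis
    by blast
qed

lemma equiv_sim: "equiv (idx I) (sim I)"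
  using is_dci unfolding is_dci_def by (elim conjE) assumption

lemma bij_betw_sig:
  assumes "(s, t) \<in> sim I"
  shows "bij_betw (sig I s t) (part I s) (part I t)"
proof -
  have "\<forall>(s, t)\<in>sim I. bij_betw (sig I s t) (part I s) (part I t)"
    using is_dci unfolding is_dci_def by (elim conjE) assumption
  then show ?thesis
    using assms by (auto dest: bspec[of _ _ "(s, t)"])
qed

lemma sig_sig:
  assumes "(s, t) \<in> sim I" "(t, u) \<in> sim I" "f \<in> part I s"
  shows "sig I t u (sig I s t f) = sig I s u f"
proof -
  have "\<forall>(s, t)\<in>sim I. \<forall>u. (t, u) \<in> sim I \<longrightarrow>
      (\<forall>f\<in>part I s. sig I t u (sig I s t f) = sig I s u f)"
    using is_dci unfolding is_dci_def by (elim conjE) assumption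
  then show ?thesis
    using assms by (auto dest: bspec[of _ _ "(s, t)"])
qed

lemma sim_excl:
  assumes "(i, j) \<in> sim I" "i \<noteq> j" "f \<in> part I i" "g \<in> part I j"
  shows "{f, g} \<in> excl I"
proof -
  have "\<forall>(i, j)\<in>sim I. i \<noteq> j \<longrightarrow> (\<forall>f\<in>part I i. \<forall>g\<in>part I j. {f, g} \<in> excl I)"
    using is_dci unfolding is_dci_def by (elim conjE) assumption
  then show ?thesis
    using assms by (auto dest: bspec[of _ _ "(i, j)"])
qed

lemma sim_idx: "(s, t) \<in> sim I \<Longrightarrow> s \<in> idx I \<and> t \<in> idx I"
  using equiv_sim unfolding equiv_def refl_on_def by blast

lemma sim_refl: "s \<in> idx I \<Longrightarrow> (s, s) \<in> sim I"
  using equiv_sim unfolding equiv_def refl_on_def by blast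

lemma sim_sym: "(s, t) \<in> sim I \<Longrightarrow> (t, s) \<in> sim I"
  using equiv_sim unfolding equiv_def sym_def by blast

lemma sim_trans: "(s, t) \<in> sim I \<Longrightarrow> (t, u) \<in> sim I \<Longrightarrow> (s, u) \<in> sim I"
  using equiv_sim unfolding equiv_def trans_def by blast

lemma sig_in_part: "(s, t) \<in> sim I \<Longrightarrow> f \<in> part I s \<Longrightarrow> sig I s t f \<in> part I t"
  by (rule bij_betw_apply[OF bij_betw_sig])

lemma sig_refl:
  assumes "s \<in> idx I" "f \<in> part I s"
  shows "sig I s s f = f"
proof -
  have ss: "(s, s) \<in> sim I"
    using assms(1) by (rule sim_refl)
  have "sig I s s (sig I s s f) = sig I s s f"
    using sig_sig[OF ss ss assms(2)] .
  moreover have "inj_on (sig I s s) (part I s)"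
    using bij_betw_sig[OF ss] by (rule bij_betw_imp_inj_on)
  ultimately show ?thesis
    using sig_in_part[OF ss assms(2)] assms(2) by (simp add: inj_on_eq_iff)
qed

lemma ext_subset_dom: "ext I C \<subseteq> dom I"
  using cint_subset_dom by (induction C) auto

lemma phi_subset_feats: "phi I C \<subseteq> feats I"
proof (cases "ext I C = {}")
  case True
  then show ?thesis
    by (simp add: phi_def phiS_def)
next
  case False
  then obtain d where d: "d \<in> ext I C"
    by blast
  then have "pi I d \<subseteq> feats I"
    using ext_subset_dom pi_subset_feats by blast
  with phi_subset_pi[OF d] show ?thesis
    by (rule order_trans)
qed

lemma phi_eq_feats_if_excl_subset:
  assumes "X \<in> excl I" "X \<subseteq> phi I C"
  shows "phi I C = feats I"
proof (rule ccontr)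
  assume "phi I C \<noteq> feats I"
  then have "ext I C \<noteq> {}"
    unfolding phi_def phiS_def by auto
  then obtain d where d: "d \<in> ext I C"
    by blast
  then have "\<not> X \<subseteq> pi I d"
    using ext_subset_dom excl_not_subset_pi[OF _ assms(1)] by blast
  then show False
    using assms(2) phi_subset_pi[OF d] by blast
qed

lemma delta_eq_idx_if_phi_full:
  assumes "phi I C = feats I"
  shows "delta I C = idx I"
proof -
  have "part I i \<inter> phi I C \<noteq> {}" if "i \<in> idx I" for i
    using part_nonempty[OF that] part_subset_feats[OF that] assms by blast
  then show ?thesis
    unfolding delta_def by blast
qed

text \<open>A feature set \<open>\<phi>(C) \<noteq> F\<close> is consistent, so by condition (5) it meets at most one
  domain of each \<open>\<sim>\<close>-class.\<close>

lemma delta_sim_eq: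
  assumes "phi I C \<noteq> feats I" "s \<in> delta I C" "t \<in> delta I C" "(s, t) \<in> sim I"
  shows "s = t"
proof (rule ccontr)
  assume "s \<noteq> t"
  obtain f where f: "f \<in> part I s" "f \<in> phi I C"
    using assms(2) by (rule in_deltaE)
  obtain g where g: "g \<in> part I t" "g \<in> phi I C"
    using assms(3) by (rule in_deltaE)
  have "{f, g} \<in> excl I"
    using sim_excl[OF assms(4) \<open>s \<noteq> t\<close> f(1) g(1)] .
  then have "phi I C = feats I"
    using f(2) g(2) by (intro phi_eq_feats_if_excl_subset) auto
  with assms(1) show False ..
qed

lemma target_sim:
  assumes "admissible I U" "s \<in> idx I"
  shows "(s, target U s) \<in> sim I"
proof (cases "s \<in> fst ` U")
  case True
  then show ?thesis
    using assms(1) target_in unfolding admissible_def by blast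
next
  case False
  then show ?thesis
    using assms(2) by (simp add: target_notin sim_refl)
qed

lemma target_idx: "admissible I U \<Longrightarrow> s \<in> idx I \<Longrightarrow> target U s \<in> idx I"
  using target_sim sim_idx by blast

lemma transl_eq_sig:
  assumes "admissible I U" "s \<in> idx I" "f \<in> part I s"
  shows "transl I U f = sig I s (target U s) f"
proof -
  have src: "f \<in> part I (fst p) \<longleftrightarrow> fst p = s" if "p \<in> U" for p
  proof -
    have "fst p \<in> idx I"
      using that assms(1) sim_idx unfolding admissible_def by (cases p) auto
    then show ?thesis
      using part_disjoint assms(2,3) by blast
  qed
  show ?thesis
  proof (cases "s \<in> fst ` U")
    case True
    have inj: "inj_on fst U"
      using assms(1) unfolding admissible_def by blast
    have "(SOME p. p \<in> U \<and> f \<in> part I (fst p)) = (s, target U s)"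
    proof (rule some_equality)
      show "(s, target U s) \<in> U \<and> f \<in> part I (fst (s, target U s))"
        using target_in[OF inj True] assms(3) by simp
      show "p = (s, target U s)" if "p \<in> U \<and> f \<in> part I (fst p)" for p
        using that src target_eqI[OF inj] by (metis prod.collapse)
    qed
    moreover have "\<exists>p\<in>U. f \<in> part I (fst p)"
      using True assms(3) by force
    ultimately show ?thesis
      unfolding transl_def by simp
  next
    case False
    then have "\<not> (\<exists>p\<in>U. f \<in> part I (fst p))"
      using src by force
    then show ?thesis
      using False assms(2,3) unfolding transl_def by (simp add: target_notin sig_refl)
  qed
qed

lemma transl_in_part:
  "admissible I U \<Longrightarrow> s \<in> idx I \<Longrightarrow> f \<in> part I s \<Longrightarrow> transl I U f \<in> part I (target U s)"
  using transl_eq_sig sig_in_part target_sim by simp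

lemma transl_outside:
  assumes "admissible I U" "\<forall>s\<in>idx I. f \<notin> part I s"
  shows "transl I U f = f"
proof -
  have "\<not> (\<exists>p\<in>U. f \<in> part I (fst p))"
    using assms sim_idx unfolding admissible_def by fastforce
  then show ?thesis
    unfolding transl_def by simp
qed

lemma transl_eq_iff_target_eq:
  assumes "admissible I U" "admissible I V"
  shows "transl I U = transl I V \<longleftrightarrow> (\<forall>s\<in>idx I. target U s = target V s)"
proof
  assume eq: "transl I U = transl I V"
  show "\<forall>s\<in>idx I. target U s = target V s"
  proof
    fix s
    assume s: "s \<in> idx I"
    obtain f where f: "f \<in> part I s"
      using part_nonempty[OF s] by blast
    have "transl I U f \<in> part I (target U s)" "transl I U f \<in> part I (target V s)"
      using transl_in_part[OF assms(1) s f] transl_in_part[OF assms(2) s f] eq by auto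
    then show "target U s = target V s"
      using part_disjoint target_idx assms s by blast
  qed
next
  assume eq: "\<forall>s\<in>idx I. target U s = target V s"
  show "transl I U = transl I V"
  proof
    fix f
    show "transl I U f = transl I V f"
    proof (cases "\<exists>s\<in>idx I. f \<in> part I s")
      case True
      then show ?thesis
        using transl_eq_sig assms eq by metis
    next
      case False
      then show ?thesis
        using transl_outside assms by metis
    qed
  qed
qed

lemma transl_transl:
  assumes "admissible I U" "admissible I V" "s \<in> idx I" "f \<in> part I s"
  shows "transl I V (transl I U f) = sig I s (target V (target U s)) f"
proof -
  let ?t = "target U s"
  have st: "(s, ?t) \<in> sim I"
    using target_sim assms(1,3) .
  have tu: "(?t, target V ?t) \<in> sim I"
    using target_sim[OF assms(2) target_idx[OF assms(1,3)]] .
  have "transl I V (transl I U f) = sig I ?t (target V ?t) (sig I s ?t f)"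
    using transl_eq_sig[OF assms(2) target_idx[OF assms(1,3)] sig_in_part[OF st assms(4)]]
      transl_eq_sig[OF assms(1,3,4)] by simp
  also have "\<dots> = sig I s (target V ?t) f"
    using sig_sig[OF st tu assms(4)] .
  finally show ?thesis .
qed

lemma target_delta_image:
  assumes "mu_witness I U C D"
  shows "target U ` delta I C = delta I D"
proof
  have adm: "admissible I U" and img: "phi I D = transl I U ` phi I C"
    using assms unfolding mu_witness_def by auto
  show "target U ` delta I C \<subseteq> delta I D"
  proof
    fix t
    assume "t \<in> target U ` delta I C"
    then obtain s f where t: "t = target U s" and s: "s \<in> idx I" "f \<in> part I s" "f \<in> phi I C"
      by (blast elim: in_deltaE)
    then show "t \<in> delta I D"
      using in_deltaI[OF target_idx[OF adm s(1)] transl_in_part[OF adm s(1,2)]] img by blast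
  qed
  show "delta I D \<subseteq> target U ` delta I C"
  proof
    fix t
    assume "t \<in> delta I D"
    then obtain g where t: "t \<in> idx I" "g \<in> part I t" "g \<in> phi I D"
      by (rule in_deltaE)
    then obtain f where f: "f \<in> phi I C" "g = transl I U f"
      using img by blast
    then obtain s where s: "s \<in> idx I" "f \<in> part I s"
      using phi_subset_feats feats_in_part by blast
    have "target U s = t"
      using part_disjoint[OF target_idx[OF adm s(1)] t(1) transl_in_part[OF adm s]] f(2) t(2)
      by simp
    then show "t \<in> target U ` delta I C"
      using in_deltaI[OF s f(1)] by blast
  qed
qed

lemma inj_on_target_comp:
  assumes "mu_witness I U C C'" "mu_witness I V C' C''"
  shows "inj_on (target V \<circ> target U) (delta I C)"
proof (rule comp_inj_on)
  show "inj_on (target U) (delta I C)"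
    using assms(1) by (rule inj_on_target_delta)
  show "inj_on (target V) (target U ` delta I C)"
    using inj_on_target_delta[OF assms(2)] target_delta_image[OF assms(1)] by simp
qed

lemma target_fixed_if_partner_full:
  assumes wC: "mu_witness I U C C'" and wD: "mu_witness I U' D D'"
    and eq: "transl I U = transl I U'"
    and D_full: "phi I D = feats I" and C_cons: "phi I C \<noteq> feats I"
    and s: "s \<in> delta I C"
  shows "target U s = s"
proof (rule ccontr)
  assume moved: "target U s \<noteq> s"
  have adm: "admissible I U" "admissible I U'"
    using wC wD unfolding mu_witness_def by auto
  have si: "s \<in> idx I"
    using s delta_subset_idx by blast
  have ti: "target U s \<in> idx I"
    using target_idx[OF adm(1) si] .
  have "target U s \<notin> delta I C"
  proof
    assume "target U s \<in> delta I C"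
    then have "s = target U s"
      using delta_sim_eq[OF C_cons s _ target_sim[OF adm(1) si]] by blast
    with moved show False
      by simp
  qed
  then have "target U (target U s) = target U s"
    by (rule target_outside_delta[OF wC])
  then have "target U' (target U s) = target U' s"
    using eq transl_eq_iff_target_eq[OF adm] si ti by simp
  moreover have "inj_on (target U') (idx I)"
    using inj_on_target_delta[OF wD] delta_eq_idx_if_phi_full[OF D_full] by simp
  ultimately have "target U s = s"
    using ti si by (simp add: inj_on_eq_iff)
  with moved show False ..
qed

lemma phi_unchanged_if_partner_full:
  assumes wC: "mu_witness I U C C'" and wD: "mu_witness I U' D D'"
    and eq: "transl I U = transl I U'"
    and D_full: "phi I D = feats I" and C_cons: "phi I C \<noteq> feats I"
  shows "phi I C' = phi I C"
proof -
  have adm: "admissible I U"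
    using wC unfolding mu_witness_def by blast
  have "transl I U f = f" if f: "f \<in> phi I C" for f
  proof -
    obtain s where s: "s \<in> idx I" "f \<in> part I s"
      using f phi_subset_feats feats_in_part by blast
    then have "target U s = s"
      using f by (intro target_fixed_if_partner_full[OF wC wD eq D_full C_cons] in_deltaI)
    then show ?thesis
      using transl_eq_sig[OF adm s] sig_refl[OF s] by simp
  qed
  then have "transl I U ` phi I C = id ` phi I C"
    by (intro image_cong) simp_all
  with wC show ?thesis
    unfolding mu_witness_def by simp
qed

lemma mu_eq_or_id_if_partner_full:
  assumes wC: "mu_witness I U C C'" and wD: "mu_witness I U' D D'"
    and eq: "transl I U = transl I U'" and D_full: "phi I D = feats I"
  shows "mu I C C' = mu I D D' \<or> id \<in> mu I C C'"
proof (cases "phi I C = feats I")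
  case True
  then have "phi I C' = phi I D'"
    using wC wD eq D_full unfolding mu_witness_def by simp
  with True D_full have "mu I C C' = mu I D D'"
    by (intro mu_cong_phi) simp_all
  then show ?thesis ..
next
  case False
  then have "mu_witness I {} C C'"
    using phi_unchanged_if_partner_full[OF wC wD eq D_full] mu_witness_empty by simp
  then have "transl I {} \<in> mu I C C'"
    unfolding mu_iff_witness by blast
  then show ?thesis
    by (simp add: transl_empty)
qed

lemma transl_eq_if_target_eq_on_delta:
  assumes wU: "mu_witness I U C D" and wV: "mu_witness I V C D'"
    and eq: "\<forall>s\<in>delta I C. target U s = target V s"
  shows "transl I U = transl I V"
proof -
  have adm: "admissible I U" "admissible I V"
    using wU wV unfolding mu_witness_def by auto
  have "target U s = target V s" for s
  proof (cases "s \<in> delta I C")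
    case False
    then show ?thesis
      using target_outside_delta[OF wU False] target_outside_delta[OF wV False] by simp
  qed (use eq in blast)
  then show ?thesis
    using transl_eq_iff_target_eq[OF adm] by simp
qed

lemma phi_full_if_target_neq:
  assumes wU: "mu_witness I U C D" and wV: "mu_witness I V C D"
    and s: "s \<in> delta I C" and ne: "target U s \<noteq> target V s"
  shows "phi I C = feats I"
proof -
  have adm: "admissible I U" "admissible I V"
    using wU wV unfolding mu_witness_def by auto
  have si: "s \<in> idx I"
    using s delta_subset_idx by blast
  have sim: "(target U s, target V s) \<in> sim I"
    using sim_trans[OF sim_sym[OF target_sim[OF adm(1) si]] target_sim[OF adm(2) si]] .
  have in_D: "target U s \<in> delta I D" "target V s \<in> delta I D"
    using s target_delta_image[OF wU] target_delta_image[OF wV] by blast+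
  have "phi I D = feats I"
  proof (rule ccontr)
    assume "phi I D \<noteq> feats I"
    with delta_sim_eq[OF _ in_D sim] ne show False
      by blast
  qed
  moreover have "phi I D = transl I U ` phi I C"
    using wU unfolding mu_witness_def by blast
  ultimately show ?thesis
    using subset_eq_if_image_eq[OF finite_feats phi_subset_feats] by simp
qed

lemma mu_trans:
  assumes "mu I C1 C2 \<inter> mu I D1 D2 \<noteq> {}" "mu I D1 D2 \<inter> mu I E1 E2 \<noteq> {}"
  shows "mu I C1 C2 \<inter> mu I E1 E2 \<noteq> {}"
proof -
  obtain U1 U2 where wC: "mu_witness I U1 C1 C2" and wD: "mu_witness I U2 D1 D2"
    and eqU: "transl I U1 = transl I U2"
    using assms(1) by (rule obtain_common_witnesses)
  obtain V1 V2 where wD': "mu_witness I V1 D1 D2" and wE: "mu_witness I V2 E1 E2"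
    and eqV: "transl I V1 = transl I V2"
    using assms(2) by (rule obtain_common_witnesses)
  show ?thesis
  proof (cases "\<forall>s\<in>delta I D1. target U2 s = target V1 s")
    case True
    then have "transl I U1 = transl I V2"
      using transl_eq_if_target_eq_on_delta[OF wD wD'] eqU eqV by simp
    then have "transl I U1 \<in> mu I C1 C2 \<inter> mu I E1 E2"
      using wC wE unfolding Int_iff mu_iff_witness by blast
    then show ?thesis
      by blast
  next
    case False
    then have D1_full: "phi I D1 = feats I"
      using phi_full_if_target_neq[OF wD wD'] by blast
    have "mu I C1 C2 = mu I D1 D2 \<or> id \<in> mu I C1 C2"
      using mu_eq_or_id_if_partner_full[OF wC wD eqU D1_full] .
    moreover have "mu I E1 E2 = mu I D1 D2 \<or> id \<in> mu I E1 E2"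
      using mu_eq_or_id_if_partner_full[OF wE wD' eqV[symmetric] D1_full] .
    ultimately consider "mu I C1 C2 = mu I D1 D2" | "mu I E1 E2 = mu I D1 D2"
      | "id \<in> mu I C1 C2 \<inter> mu I E1 E2"
      by blast
    then show ?thesis
      by cases (use assms in auto)
  qed
qed

lemma notin_delta_if_partner_notin:
  assumes wC: "mu_witness I U C C'" and wD: "mu_witness I U' D D'"
    and eq: "transl I U = transl I U'"
    and s: "s \<in> delta I C" "s \<notin> delta I D"
  shows "s \<notin> delta I D'"
proof
  assume "s \<in> delta I D'"
  then have "s \<in> target U' ` delta I D"
    by (simp add: target_delta_image[OF wD])
  then obtain r where r: "r \<in> delta I D" "target U' r = s"
    by blast
  have adm: "admissible I U" "admissible I U'"
    using wC wD unfolding mu_witness_def by auto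
  have same: "target U x = target U' x" if "x \<in> idx I" for x
    using eq transl_eq_iff_target_eq[OF adm] that by blast
  have ri: "r \<in> idx I" and si: "s \<in> idx I"
    using r(1) s(1) delta_subset_idx by blast+
  have "r \<noteq> s"
    using r(1) s(2) by blast
  have Ur: "target U r = s"
    using same[OF ri] r(2) by simp
  have "r \<in> delta I C"
  proof (rule ccontr)
    assume "r \<notin> delta I C"
    then have "target U r = r"
      by (rule target_outside_delta[OF wC])
    with Ur \<open>r \<noteq> s\<close> show False
      by simp
  qed
  moreover have "target U s = s"
    using same[OF si] target_outside_delta[OF wD s(2)] by simp
  ultimately have "r = s"
    using Ur inj_onD[OF inj_on_target_delta[OF wC] _ _ s(1)] by simp
  with \<open>r \<noteq> s\<close> show False ..
qed

lemma mu_witness_graph: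
  assumes A: "A \<subseteq> delta I C" and sim: "\<forall>s\<in>A. (s, \<rho> s) \<in> sim I"
    and inj: "inj_on \<rho> (delta I C)" and fixed: "\<forall>s\<in>delta I C - A. \<rho> s = s"
    and g: "\<forall>s\<in>idx I. \<forall>f\<in>part I s. g f = sig I s (\<rho> s) f"
    and img: "phi I D = g ` phi I C"
  shows "mu_witness I ((\<lambda>s. (s, \<rho> s)) ` A) C D"
proof -
  let ?W = "(\<lambda>s. (s, \<rho> s)) ` A"
  have fst_W: "fst ` ?W = A"
    by (simp add: image_image)
  have adm: "admissible I ?W"
    unfolding admissible_def using sim inj_on_subset[OF inj A] by (auto simp: inj_on_def)
  have "\<rho> s \<notin> delta I C - A" if s: "s \<in> A" for s
  proof
    assume out: "\<rho> s \<in> delta I C - A"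
    then have "\<rho> (\<rho> s) = \<rho> s"
      using fixed by blast
    then have "\<rho> s = s"
      using inj_onD[OF inj] A s out by blast
    with s out show False
      by simp
  qed
  then have disj: "snd ` ?W \<inter> (delta I C - fst ` ?W) = {}"
    using fst_W by auto
  have "transl I ?W ` phi I C = g ` phi I C"
  proof (rule image_cong[OF refl])
    fix f
    assume f: "f \<in> phi I C"
    obtain s where s: "s \<in> idx I" "f \<in> part I s"
      using f phi_subset_feats feats_in_part by blast
    then have "s \<in> delta I C"
      using f by (intro in_deltaI)
    then have "target ?W s = \<rho> s"
      using fixed by (simp add: target_graph)
    then show "transl I ?W f = g f"
      using transl_eq_sig[OF adm s] g s by simp
  qed
  with adm disj img fst_W A show ?thesis
    unfolding mu_witness_def by simp
qed

lemma mu_witness_comp: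
  assumes wC: "mu_witness I U C C'" and wD: "mu_witness I U' D D'"
    and eqU: "transl I U = transl I U'"
    and wC': "mu_witness I V C' C''" and wD': "mu_witness I V' D' D''"
    and eqV: "transl I V = transl I V'"
  shows "mu_witness I ((\<lambda>s. (s, target V (target U s))) ` (delta I C \<inter> delta I D)) C C''"
proof -
  have adm: "admissible I U" "admissible I U'" "admissible I V" "admissible I V'"
    using wC wD wC' wD' unfolding mu_witness_def by auto
  have sameU: "target U s = target U' s" and sameV: "target V s = target V' s"
    if "s \<in> idx I" for s
    using that eqU eqV transl_eq_iff_target_eq[OF adm(1,2)] transl_eq_iff_target_eq[OF adm(3,4)]
    by blast+
  show ?thesis
  proof (rule mu_witness_graph[where g = "transl I V \<circ> transl I U"])
    show "delta I C \<inter> delta I D \<subseteq> delta I C"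
      by blast
    show "\<forall>s\<in>delta I C \<inter> delta I D. (s, target V (target U s)) \<in> sim I"
      using sim_trans[OF target_sim[OF adm(1)] target_sim[OF adm(3) target_idx[OF adm(1)]]]
        delta_subset_idx by blast
    show "inj_on (\<lambda>s. target V (target U s)) (delta I C)"
      using inj_on_target_comp[OF wC wC'] by (simp add: comp_def)
    show "\<forall>s\<in>delta I C - delta I C \<inter> delta I D. target V (target U s) = s"
    proof
      fix s
      assume "s \<in> delta I C - delta I C \<inter> delta I D"
      then have s: "s \<in> delta I C" "s \<notin> delta I D" and si: "s \<in> idx I"
        using delta_subset_idx by blast+
      have "target U s = s"
        using sameU[OF si] target_outside_delta[OF wD s(2)] by simp
      moreover have "s \<notin> delta I D'"
        using notin_delta_if_partner_notin[OF wC wD eqU s] .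
      then have "target V s = s"
        using sameV[OF si] target_outside_delta[OF wD'] by simp
      ultimately show "target V (target U s) = s"
        by simp
    qed
    show "\<forall>s\<in>idx I. \<forall>f\<in>part I s. (transl I V \<circ> transl I U) f = sig I s (target V (target U s)) f"
      using transl_transl[OF adm(1,3)] by simp
    show "phi I C'' = (transl I V \<circ> transl I U) ` phi I C"
      using wC wC' unfolding mu_witness_def by (simp add: image_comp)
  qed
qed

lemma mu_comp:
  assumes "mu I C1 C2 \<inter> mu I D1 D2 \<noteq> {}" "mu I C2 C3 \<inter> mu I D2 D3 \<noteq> {}"
  shows "mu I C1 C3 \<inter> mu I D1 D3 \<noteq> {}"
proof -
  obtain U1 U2 where wC: "mu_witness I U1 C1 C2" and wD: "mu_witness I U2 D1 D2"
    and eqU: "transl I U1 = transl I U2"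
    using assms(1) by (rule obtain_common_witnesses)
  obtain V1 V2 where wC': "mu_witness I V1 C2 C3" and wD': "mu_witness I V2 D2 D3"
    and eqV: "transl I V1 = transl I V2"
    using assms(2) by (rule obtain_common_witnesses)
  have adm: "admissible I U1" "admissible I U2" "admissible I V1" "admissible I V2"
    using wC wD wC' wD' unfolding mu_witness_def by auto
  let ?W = "(\<lambda>s. (s, target V1 (target U1 s))) ` (delta I C1 \<inter> delta I D1)"
  have "mu_witness I ?W C1 C3"
    by (rule mu_witness_comp[OF wC wD eqU wC' wD' eqV])
  moreover have "(\<lambda>s. (s, target V2 (target U2 s))) ` (delta I D1 \<inter> delta I C1) = ?W"
  proof (rule image_cong)
    fix s
    assume "s \<in> delta I C1 \<inter> delta I D1"
    then have si: "s \<in> idx I"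
      using delta_subset_idx by blast
    show "(s, target V2 (target U2 s)) = (s, target V1 (target U1 s))"
      using si target_idx[OF adm(1) si] eqU eqV transl_eq_iff_target_eq[OF adm(1,2)]
        transl_eq_iff_target_eq[OF adm(3,4)] by simp
  qed blast
  then have "mu_witness I ?W D1 D3"
    using mu_witness_comp[OF wD wC eqU[symmetric] wD' wC' eqV[symmetric]] by simp
  ultimately have "transl I ?W \<in> mu I C1 C3 \<inter> mu I D1 D3"
    unfolding Int_iff mu_iff_witness by blast
  then show ?thesis
    by blast
qed

end

theorem proposition6:
  fixes NCN :: "'c set" and IR :: "'r set"
    and C1 C2 C3 D1 D2 D3 E1 E2 :: "('c, 'r) concept"
  assumes "natural NCN IR C1" "natural NCN IR C2" "natural NCN IR C3"
    and "natural NCN IR D1" "natural NCN IR D2" "natural NCN IR D3"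
    and "natural NCN IR E1" "natural NCN IR E2"
  shows "entails NCN IR {Analogy C1 C2 D1 D2, Analogy D1 D2 E1 E2}
           (Analogy C1 C2 E1 E2) TYPE('d \<times> 'f) \<and>
         entails NCN IR {Analogy C1 C2 D1 D2, Analogy C2 C3 D2 D3}
           (Analogy C1 C3 D1 D3) TYPE('d \<times> 'f)"
proof -
  \<comment> \<open>Both rules hold for arbitrary concepts.\<close>
  have "sat I (Analogy C1 C2 E1 E2)"
    if "is_model NCN IR {Analogy C1 C2 D1 D2, Analogy D1 D2 E1 E2} I"
    for I :: "('d, 'f, 'c, 'r) dci"
  proof -
    have "domain_constrained I" "mu I C1 C2 \<inter> mu I D1 D2 \<noteq> {}" "mu I D1 D2 \<inter> mu I E1 E2 \<noteq> {}"
      using that unfolding is_model_def domain_constrained_def by simp_all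
    then show ?thesis
      using domain_constrained.mu_trans by simp
  qed
  moreover have "sat I (Analogy C1 C3 D1 D3)"
    if "is_model NCN IR {Analogy C1 C2 D1 D2, Analogy C2 C3 D2 D3} I"
    for I :: "('d, 'f, 'c, 'r) dci"
  proof -
    have "domain_constrained I" "mu I C1 C2 \<inter> mu I D1 D2 \<noteq> {}" "mu I C2 C3 \<inter> mu I D2 D3 \<noteq> {}"
      using that unfolding is_model_def domain_constrained_def by simp_all
    then show ?thesis
      using domain_constrained.mu_comp by simp
  qed
  ultimately show ?thesis
    unfolding entails_def by blast
qed

end
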